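(* Let H1 $=i(x,i(y,x))$, H2 $=i(i(x,i(y,z)),i(i(x,y),i(x,z)))$, H3 $=i(i(x,n(x)),n(x))$, H4 $=i(x,i(n(x),y))$. The formulas provable from H1–H4 using condensed detachment as the sole rule of inference are exactly those provable from H1–H4 using modus ponens and substitution. Moreover, if $b$ has a proof by modus ponens from substitution instances of H1–H4 in which no line contains a double negation, then $b$ has a double-negation-free condensed-detachment proof from H1–H4.
   Context: Formulas are terms built from propositional variables using the binary connective $i$ (implication) and the unary connective $n$ (negation). Modus ponens: from $i(p,q)$ and $p$ infer $q$; substitution: from $p$ infer $p\sigma$. Condensed detachment: from a major premiss $i(A,B)$ and a minor premiss $C$, after renaming variables so that the two premisses share no variables, if $A$ and $C$ are unifiable with most general unifier $\sigma$, infer $B\sigma$; alphabetic variants of axioms count as axioms and conclusions may be renamed. A formula contains a double negation if it has a (not necessarily proper) subformula of the form $n(n(t))$; a condensed-detachment proof is double-negation free if none of its deduced (non-axiom) steps contains a double negation. *)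

theory Defs
  imports Main
begin

datatype form = V nat | I form form | N form

primrec subst :: "(nat \<Rightarrow> form) \<Rightarrow> form \<Rightarrow> form" where
  "subst s (V x) = s x"
| "subst s (I a b) = I (subst s a) (subst s b)"
| "subst s (N a) = N (subst s a)"

primrec vars :: "form \<Rightarrow> nat set" where
  "vars (V x) = {x}"
| "vars (I a b) = vars a \<union> vars b"
| "vars (N a) = vars a"

definition variant :: "form \<Rightarrow> form \<Rightarrow> bool" where
  "variant f g \<longleftrightarrow> (\<exists>\<rho>. bij \<rho> \<and> g = subst (V \<circ> \<rho>) f)"

definition is_mgu :: "(nat \<Rightarrow> form) \<Rightarrow> form \<Rightarrow> form \<Rightarrow> bool" where
  "is_mgu \<sigma> s t \<longleftrightarrow> subst \<sigma> s = subst \<sigma> t \<and>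
     (\<forall>\<tau>. subst \<tau> s = subst \<tau> t \<longrightarrow> (\<exists>\<rho>. \<forall>x. \<tau> x = subst \<rho> (\<sigma> x)))"

definition cd_step :: "form \<Rightarrow> form \<Rightarrow> form \<Rightarrow> bool" where
  "cd_step M m D \<longleftrightarrow> (\<exists>\<rho>1 \<rho>2 A B \<sigma>. bij \<rho>1 \<and> bij \<rho>2 \<and>
      subst (V \<circ> \<rho>1) M = I A B \<and>
      vars (I A B) \<inter> vars (subst (V \<circ> \<rho>2) m) = {} \<and>
      is_mgu \<sigma> A (subst (V \<circ> \<rho>2) m) \<and>
      variant (subst \<sigma> B) D)"

definition cd_proof :: "form set \<Rightarrow> form list \<Rightarrow> bool" where
  "cd_proof Ax ls \<longleftrightarrow> (\<forall>k < length ls.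
      (\<exists>a\<in>Ax. variant a (ls ! k)) \<or>
      (\<exists>M m. M \<in> set (take k ls) \<and> m \<in> set (take k ls) \<and> cd_step M m (ls ! k)))"

definition cd_provable :: "form set \<Rightarrow> form \<Rightarrow> bool" where
  "cd_provable Ax b \<longleftrightarrow> (\<exists>ls. cd_proof Ax ls \<and> ls \<noteq> [] \<and> last ls = b)"

inductive mp_sub_provable :: "form set \<Rightarrow> form \<Rightarrow> bool" for Ax where
  ax: "a \<in> Ax \<Longrightarrow> mp_sub_provable Ax a"
| sub: "mp_sub_provable Ax p \<Longrightarrow> mp_sub_provable Ax (subst s p)"
| mp: "mp_sub_provable Ax (I p q) \<Longrightarrow> mp_sub_provable Ax p \<Longrightarrow> mp_sub_provable Ax q"

definition mp_inst_proof :: "form set \<Rightarrow> form list \<Rightarrow> bool" where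
  "mp_inst_proof Ax ls \<longleftrightarrow> (\<forall>k < length ls.
      (\<exists>a\<in>Ax. \<exists>s. ls ! k = subst s a) \<or>
      (\<exists>p. I p (ls ! k) \<in> set (take k ls) \<and> p \<in> set (take k ls)))"

primrec has_dn :: "form \<Rightarrow> bool" where
  "has_dn (V x) = False"
| "has_dn (I a b) = (has_dn a \<or> has_dn b)"
| "has_dn (N a) = ((\<exists>t. a = N t) \<or> has_dn a)"

definition dn_free_cd_proof :: "form set \<Rightarrow> form list \<Rightarrow> bool" where
  "dn_free_cd_proof Ax ls \<longleftrightarrow> cd_proof Ax ls \<and>
     (\<forall>k < length ls. (\<exists>a\<in>Ax. variant a (ls ! k)) \<or> \<not> has_dn (ls ! k))"

definition H1 :: form where "H1 = I (V 0) (I (V 1) (V 0))"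
definition H2 :: form where
  "H2 = I (I (V 0) (I (V 1) (V 2))) (I (I (V 0) (V 1)) (I (V 0) (V 2)))"
definition H3 :: form where "H3 = I (I (V 0) (N (V 0))) (N (V 0))"
definition H4 :: form where "H4 = I (V 0) (I (N (V 0)) (V 1))"

definition Hax :: "form set" where "Hax = {H1, H2, H3, H4}"

end

theory Submission
  imports Defs "HOL-Combinatorics.Permutations"
begin

(*
  Every condensed-detachment step is an instance of modus ponens applied to substitution
  instances of its premisses, which gives one direction.  Conversely, condensed detachment
  is closed under modus ponens, and it is closed under substitution as soon as every
  self-implication f -> f is derivable: detaching t from t\<sigma> -> t\<sigma> yields t\<sigma>, because
  the antecedent is an instance of the minor premiss.

  Self-implications are obtained from an implication chain D = x1 -> ... -> xn -> z through
  all variables of f: D -> (f -> f) follows by induction on f, and D is then discharged.  The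
  chain is needed because condensed detachment renames its premisses apart; unifying the
  copies of D identifies the variables of the two induction hypotheses again.  The few fixed
  theorem schemes used on the way are derived by evaluating condensed-detachment terms.
  No line of these derivations contains a double negation that is not already in f, which
  yields the double-negation-free refinement.
*)

lemma subst_V [simp]: "subst V f = f"
  by (induction f) auto

lemma subst_subst: "subst s (subst t f) = subst (\<lambda>x. subst s (t x)) f"
  by (induction f) auto

lemma subst_cong: "(\<And>x. x \<in> vars f \<Longrightarrow> s x = t x) \<Longrightarrow> subst s f = subst t f"
  by (induction f) auto

lemma subst_eq_on_vars: "subst s f = subst t f \<Longrightarrow> x \<in> vars f \<Longrightarrow> s x = t x"
  by (induction f) auto

lemma subst_id_on_vars: "(\<And>x. x \<in> vars f \<Longrightarrow> s x = V x) \<Longrightarrow> subst s f = f"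
  using subst_cong[of f s V] by simp

lemma finite_vars [simp]: "finite (vars f)"
  by (induction f) auto

lemma vars_subst: "vars (subst s f) = (\<Union>x\<in>vars f. vars (s x))"
  by (induction f) auto

lemma has_dn_rename [simp]: "has_dn (subst (V \<circ> \<rho>) f) = has_dn f"
proof (induction f)
  case (N a)
  then show ?case by (cases a) auto
qed auto

section \<open>Unification\<close>

fun unify :: "nat \<Rightarrow> (form \<times> form) list \<Rightarrow> (nat \<Rightarrow> form) option" where
  "unify 0 _ = None"
| "unify (Suc n) [] = Some V"
| "unify (Suc n) ((V x, t) # eqs) =
    (if t = V x then unify n eqs
     else if x \<in> vars t then None
     else map_option (\<lambda>\<sigma> y. subst \<sigma> ((V(x := t)) y))
       (unify n (map (\<lambda>(a, b). (subst (V(x := t)) a, subst (V(x := t)) b)) eqs)))"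
| "unify (Suc n) ((I a b, V x) # eqs) = unify n ((V x, I a b) # eqs)"
| "unify (Suc n) ((N a, V x) # eqs) = unify n ((V x, N a) # eqs)"
| "unify (Suc n) ((I a b, I c e) # eqs) = unify n ((a, c) # (b, e) # eqs)"
| "unify (Suc n) ((N a, N c) # eqs) = unify n ((a, c) # eqs)"
| "unify (Suc n) ((I a b, N c) # eqs) = None"
| "unify (Suc n) ((N a, I c e) # eqs) = None"

(* unify.simps only match fuel of the form Suc n; these equations also apply to numerals. *)
lemma unify_eval:
  "unify n [] = (if n = 0 then None else Some V)"
  "unify n ((V x, t) # eqs) = (if n = 0 then None
     else if t = V x then unify (n - 1) eqs
     else if x \<in> vars t then None
     else map_option (\<lambda>\<sigma> y. subst \<sigma> ((V(x := t)) y))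
       (unify (n - 1) (map (\<lambda>(a, b). (subst (V(x := t)) a, subst (V(x := t)) b)) eqs)))"
  "unify n ((I a b, V x) # eqs) = (if n = 0 then None else unify (n - 1) ((V x, I a b) # eqs))"
  "unify n ((N a, V x) # eqs) = (if n = 0 then None else unify (n - 1) ((V x, N a) # eqs))"
  "unify n ((I a b, I c e) # eqs) = (if n = 0 then None else unify (n - 1) ((a, c) # (b, e) # eqs))"
  "unify n ((N a, N c) # eqs) = (if n = 0 then None else unify (n - 1) ((a, c) # eqs))"
  "unify n ((I a b, N c) # eqs) = None"
  "unify n ((N a, I c e) # eqs) = None"
  by (cases n; simp)+

definition unifies :: "(nat \<Rightarrow> form) \<Rightarrow> (form \<times> form) list \<Rightarrow> bool" where
  "unifies \<tau> eqs \<longleftrightarrow> (\<forall>(a, b)\<in>set eqs. subst \<tau> a = subst \<tau> b)"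

lemma unifies_simps [simp]:
  "unifies \<tau> []"
  "unifies \<tau> ((a, b) # eqs) \<longleftrightarrow> subst \<tau> a = subst \<tau> b \<and> unifies \<tau> eqs"
  by (auto simp: unifies_def)

lemma unify_sound:
  "unify n eqs = Some \<sigma> \<Longrightarrow> unifies \<sigma> eqs \<and> (\<forall>\<tau>. unifies \<tau> eqs \<longrightarrow> (\<forall>x. \<tau> x = subst \<tau> (\<sigma> x)))"
proof (induction n eqs arbitrary: \<sigma> rule: unify.induct)
  case (3 n x t eqs)
  define \<theta> where "\<theta> = V(x := t)"
  define eqs' where "eqs' = map (\<lambda>(a, b). (subst \<theta> a, subst \<theta> b)) eqs"
  show ?case
  proof (cases "t = V x")
    case False
    with "3.prems" have x: "x \<notin> vars t" by (auto split: if_splits)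
    with False "3.prems" obtain \<sigma>' where \<sigma>': "unify n eqs' = Some \<sigma>'"
      and \<sigma>: "\<sigma> = (\<lambda>y. subst \<sigma>' (\<theta> y))"
      by (auto simp: \<theta>_def eqs'_def)
    have IH: "unifies \<sigma>' eqs'" "\<And>\<tau>. unifies \<tau> eqs' \<Longrightarrow> \<tau> y = subst \<tau> (\<sigma>' y)" for y
      using "3.IH"(2)[OF False x] \<sigma>' by (auto simp: \<theta>_def eqs'_def)
    have \<theta>t: "subst \<theta> t = t"
      using x by (intro subst_id_on_vars) (auto simp: \<theta>_def)
    have "subst \<sigma> (V x) = subst \<sigma> t"
      using \<theta>t by (simp add: \<sigma> subst_subst[symmetric]) (simp add: \<theta>_def)
    moreover have "unifies \<sigma> eqs"
      using IH(1) by (auto simp: unifies_def eqs'_def \<sigma> subst_subst[symmetric])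
    moreover have "\<tau> y = subst \<tau> (\<sigma> y)" if "unifies \<tau> ((V x, t) # eqs)" for \<tau> y
    proof -
      have \<tau>\<theta>: "subst \<tau> (\<theta> z) = \<tau> z" for z
        using that by (simp add: \<theta>_def)
      then have "unifies \<tau> eqs'"
        using that by (auto simp: unifies_def eqs'_def subst_subst)
      then have "subst \<tau> (\<sigma> y) = subst \<tau> (\<theta> y)"
        using IH(2) by (simp add: \<sigma> subst_subst)
      then show ?thesis
        using \<tau>\<theta> by simp
    qed
    ultimately show ?thesis
      by simp
  qed (use "3.prems" "3.IH" in auto)
qed auto

lemma unify_is_mgu: "unify n [(a, b)] = Some \<sigma> \<Longrightarrow> is_mgu \<sigma> a b"
  using unify_sound[of n "[(a, b)]" \<sigma>] unfolding is_mgu_def by auto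

declare unify.simps [simp del]

lemma inj_on_extends_to_bij:
  fixes p :: "'a \<Rightarrow> 'a"
  assumes "finite F" "inj_on p F"
  obtains r where "bij r" "\<And>x. x \<in> F \<Longrightarrow> r x = p x"
proof -
  let ?S = "F \<union> p ` F"
  have "card (?S - F) = card (?S - p ` F)"
    using assms by (simp add: Un_Diff card_Diff_subset_Int card_image Int_commute)
  then obtain g where g: "bij_betw g (?S - F) (?S - p ` F)"
    using assms(1) finite_same_card_bij by (metis finite_Diff finite_UnI finite_imageI)
  define r where "r x = (if x \<in> F then p x else if x \<in> ?S then g x else x)" for x
  have "bij_betw r F (p ` F)"
    using assms(2) by (auto simp: bij_betw_def inj_on_def r_def)
  moreover have "bij_betw r (?S - F) (?S - p ` F)"
    using g by (rule bij_betw_cong[THEN iffD1, rotated]) (auto simp: r_def)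
  ultimately have "bij_betw r (F \<union> (?S - F)) (p ` F \<union> (?S - p ` F))"
    by (rule bij_betw_combine) blast
  then have "r permutes ?S"
    by (intro bij_imp_permutes) (auto simp: r_def Un_absorb1)
  then show thesis
    by (intro that[of r] permutes_bij[of r]) (simp_all add: r_def)
qed

lemma variant_refl: "variant f f"
  unfolding variant_def by (rule exI[of _ id]) auto

lemma variant_trans: "variant f g \<Longrightarrow> variant g h \<Longrightarrow> variant f h"
  unfolding variant_def
proof (elim exE conjE)
  fix \<rho> \<rho>' assume "bij \<rho>" "g = subst (V \<circ> \<rho>) f" "bij \<rho>'" "h = subst (V \<circ> \<rho>') g"
  then show "\<exists>\<rho>. bij \<rho> \<and> h = subst (V \<circ> \<rho>) f"
    by (intro exI[of _ "\<rho>' \<circ> \<rho>"] conjI bij_comp) (simp_all add: subst_subst comp_def)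
qed

lemma variant_rename: "inj_on \<rho> (vars f) \<Longrightarrow> variant f (subst (V \<circ> \<rho>) f)"
proof -
  assume "inj_on \<rho> (vars f)"
  then obtain r where r: "bij r" "\<And>x. x \<in> vars f \<Longrightarrow> r x = \<rho> x"
    using inj_on_extends_to_bij finite_vars by blast
  have "subst (V \<circ> \<rho>) f = subst (V \<circ> r) f"
    using r(2) by (intro subst_cong) simp
  with r(1) show ?thesis
    unfolding variant_def by blast
qed

fun index_of :: "'a list \<Rightarrow> 'a \<Rightarrow> nat" where
  "index_of [] x = 0"
| "index_of (y # ys) x = (if x = y then 0 else Suc (index_of ys x))"

lemma inj_on_index_of: "inj_on (index_of xs) (set xs)"
  by (induction xs) (auto simp: inj_on_def)

primrec var_list :: "form \<Rightarrow> nat list" where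
  "var_list (V x) = [x]"
| "var_list (I a b) = var_list a @ var_list b"
| "var_list (N a) = var_list a"

lemma set_var_list [simp]: "set (var_list f) = vars f"
  by (induction f) auto

(* Variables are renumbered 0, 1, 2, ... in the order of their first occurrence. *)
definition canon :: "form \<Rightarrow> form" where
  "canon f = subst (V \<circ> index_of (rev (remdups (rev (var_list f))))) f"

lemma variant_canon: "variant f (canon f)"
  unfolding canon_def by (rule variant_rename) (metis inj_on_index_of set_rev set_remdups set_var_list)

primrec max_var :: "form \<Rightarrow> nat" where
  "max_var (V x) = x"
| "max_var (I a b) = max (max_var a) (max_var b)"
| "max_var (N a) = max_var a"

lemma less_Suc_max_var: "x \<in> vars f \<Longrightarrow> x < Suc (max_var f)"
  by (induction f) auto

definition block_swap :: "nat \<Rightarrow> nat \<Rightarrow> nat" where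
  "block_swap k x = (if x < k then x + k else if x < 2 * k then x - k else x)"

lemma block_swap_block_swap [simp]: "block_swap k (block_swap k x) = x"
  unfolding block_swap_def by auto

lemma bij_block_swap: "bij (block_swap k)"
  by (metis bijI' block_swap_block_swap)

lemma vars_block_swap:
  assumes "\<forall>x\<in>vars f. x < k" "y \<in> vars (subst (V \<circ> block_swap k) f)"
  shows "k \<le> y"
  using assms by (auto simp: vars_subst block_swap_def)

section \<open>Condensed detachment steps\<close>

lemma is_mgu_sym: "is_mgu \<sigma> s t \<longleftrightarrow> is_mgu \<sigma> t s"
  unfolding is_mgu_def by metis

lemma is_mgu_instance:
  assumes inst: "subst \<theta> s = t" and disj: "vars s \<inter> vars t = {}"
  shows "is_mgu (\<lambda>x. if x \<in> vars s then \<theta> x else V x) s t" (is "is_mgu ?\<sigma> s t")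
  unfolding is_mgu_def
proof (intro conjI allI impI)
  have "subst ?\<sigma> s = subst \<theta> s"
    by (rule subst_cong) simp
  then have "subst ?\<sigma> s = t"
    using inst by simp
  moreover have "subst ?\<sigma> t = t"
    using disj by (intro subst_id_on_vars) auto
  ultimately show "subst ?\<sigma> s = subst ?\<sigma> t"
    by simp
next
  fix \<tau> assume "subst \<tau> s = subst \<tau> t"
  also have "\<dots> = subst (\<lambda>x. subst \<tau> (\<theta> x)) s"
    unfolding inst[symmetric] by (rule subst_subst)
  finally have "subst \<tau> s = subst (\<lambda>x. subst \<tau> (\<theta> x)) s" .
  then have "\<tau> x = subst \<tau> (?\<sigma> x)" for x
    using subst_eq_on_vars[of \<tau> s _ x] by (cases "x \<in> vars s") simp_all
  then show "\<exists>\<rho>. \<forall>x. \<tau> x = subst \<rho> (?\<sigma> x)"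
    by blast
qed

lemma cd_stepI:
  assumes "bij \<rho>1" "bij \<rho>2" "subst (V \<circ> \<rho>1) M = I A B"
    "vars (I A B) \<inter> vars (subst (V \<circ> \<rho>2) m) = {}"
    "is_mgu \<sigma> A (subst (V \<circ> \<rho>2) m)" "variant (subst \<sigma> B) f"
  shows "cd_step M m f"
  using assms unfolding cd_step_def by blast

lemma vars_rename_apart:
  assumes "\<forall>x\<in>vars f. x < k" "\<forall>x\<in>vars g. x < k"
  shows "vars f \<inter> vars (subst (V \<circ> block_swap k) g) = {}"
  using assms vars_block_swap[of g k] by fastforce

lemma cd_step_rename_major:
  assumes "cd_step (subst (V \<circ> \<rho>) M) m f" "bij \<rho>"
  shows "cd_step M m f"
proof -
  obtain \<rho>1 \<rho>2 A B \<sigma> where "bij \<rho>1" "bij \<rho>2" "subst (V \<circ> \<rho>1) (subst (V \<circ> \<rho>) M) = I A B"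
    "vars (I A B) \<inter> vars (subst (V \<circ> \<rho>2) m) = {}"
    "is_mgu \<sigma> A (subst (V \<circ> \<rho>2) m)" "variant (subst \<sigma> B) f"
    using assms(1) unfolding cd_step_def by blast
  with assms(2) show ?thesis
    by (intro cd_stepI[of "\<rho>1 \<circ> \<rho>" \<rho>2] bij_comp) (simp_all add: subst_subst comp_def)
qed

lemma cd_step_instance_apart:
  assumes "subst \<theta> A = m" "vars (I A B) \<inter> vars m = {}"
  shows "cd_step (I A B) m (subst (\<lambda>x. if x \<in> vars A then \<theta> x else V x) B)"
  using assms is_mgu_instance[OF assms(1)] variant_refl
  by (intro cd_stepI[of id id]) auto

lemma renaming_for_minor_instance:
  assumes fresh: "\<And>x. x \<in> vars B - vars A \<Longrightarrow> \<exists>y. \<theta> x = V y \<and> y \<notin> vars m"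
    and inj: "inj_on \<theta> (vars B - vars A)"
    and below: "\<And>y. y \<in> vars (subst \<theta> B) \<Longrightarrow> y < k"
  obtains \<rho> where "bij \<rho>" "\<And>x. x \<in> vars A \<Longrightarrow> \<rho> x = x + k"
    "\<And>x. x \<in> vars B - vars A \<Longrightarrow> \<theta> x = V (\<rho> x) \<and> \<rho> x \<notin> vars m \<and> \<rho> x < k"
proof -
  define p where "p x = (if x \<in> vars A then x + k else case \<theta> x of V y \<Rightarrow> y | _ \<Rightarrow> x)" for x
  have p_fresh: "\<theta> x = V (p x) \<and> p x \<notin> vars m \<and> p x < k" if x: "x \<in> vars B - vars A" for x
  proof -
    obtain y where y: "\<theta> x = V y" "y \<notin> vars m"
      using fresh[OF x] by blast
    then have "y \<in> vars (subst \<theta> B)"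
      using x by (force simp: vars_subst)
    then show ?thesis
      using x y below by (simp add: p_def)
  qed
  have "inj_on p (vars (I A B))"
  proof (rule inj_onI)
    fix x x' assume "x \<in> vars (I A B)" "x' \<in> vars (I A B)" "p x = p x'"
    then show "x = x'"
      using p_fresh[of x] p_fresh[of x'] inj by (auto simp: p_def inj_on_def split: if_splits)
  qed
  then obtain \<rho> where "bij \<rho>" "\<And>x. x \<in> vars (I A B) \<Longrightarrow> \<rho> x = p x"
    using inj_on_extends_to_bij finite_vars by blast
  with p_fresh show thesis
    by (intro that[of \<rho>]) (auto simp: p_def)
qed

lemma cd_step_minor_instance:
  assumes inst: "subst \<theta> A = m"
    and fresh: "\<And>x. x \<in> vars B - vars A \<Longrightarrow> \<exists>y. \<theta> x = V y \<and> y \<notin> vars m"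
    and inj: "inj_on \<theta> (vars B - vars A)"
  shows "cd_step (I A B) m (subst \<theta> B)"
proof -
  define k where "k = Suc (max_var (I (subst \<theta> B) m))"
  have below: "\<And>y. y \<in> vars (subst \<theta> B) \<Longrightarrow> y < k" "\<And>y. y \<in> vars m \<Longrightarrow> y < k"
    unfolding k_def using less_Suc_max_var by fastforce+
  \<comment> \<open>rename the major premiss so that A lies above the variables of m and every other
    variable of B already has the name that \<theta> gives it\<close>
  obtain \<rho> where \<rho>: "bij \<rho>" "\<And>x. x \<in> vars A \<Longrightarrow> \<rho> x = x + k"
    "\<And>x. x \<in> vars B - vars A \<Longrightarrow> \<theta> x = V (\<rho> x) \<and> \<rho> x \<notin> vars m \<and> \<rho> x < k"
    using renaming_for_minor_instance[OF fresh inj below(1)] by blast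
  define A' where "A' = subst (V \<circ> \<rho>) A"
  define B' where "B' = subst (V \<circ> \<rho>) B"
  define \<theta>' where "\<theta>' y = \<theta> (y - k)" for y
  have vars_A': "vars A' = (\<lambda>x. x + k) ` vars A"
    using \<rho>(2) by (auto simp: A'_def vars_subst)
  have "subst \<theta>' A' = m"
    unfolding inst[symmetric] A'_def subst_subst using \<rho>(2) by (intro subst_cong) (simp add: \<theta>'_def)
  moreover have "vars (I A' B') \<inter> vars m = {}"
    using vars_A' \<rho>(2,3) below(2) by (fastforce simp: B'_def vars_subst)
  ultimately have "cd_step (I A' B') m (subst (\<lambda>y. if y \<in> vars A' then \<theta>' y else V y) B')"
    by (rule cd_step_instance_apart)
  moreover have "subst (\<lambda>y. if y \<in> vars A' then \<theta>' y else V y) B' = subst \<theta> B"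
    unfolding B'_def subst_subst
  proof (rule subst_cong)
    fix x assume "x \<in> vars B"
    then show "subst (\<lambda>y. if y \<in> vars A' then \<theta>' y else V y) ((V \<circ> \<rho>) x) = \<theta> x"
      using \<rho>(2,3)[of x] vars_A' by (cases "x \<in> vars A") (auto simp: \<theta>'_def)
  qed
  ultimately show ?thesis
    using cd_step_rename_major[of \<rho> "I A B"] \<rho>(1) by (simp add: A'_def B'_def)
qed

lemma cd_step_major_instance:
  assumes inst: "A = subst \<theta> m"
  shows "cd_step (I A B) m B"
proof -
  define k where "k = Suc (max_var (I (I A B) m))"
  have below: "\<forall>x\<in>vars (I A B). x < k" "\<forall>x\<in>vars m. x < k"
    unfolding k_def using less_Suc_max_var by fastforce+
  define m' where "m' = subst (V \<circ> block_swap k) m"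
  define \<sigma> where "\<sigma> = (\<lambda>y. if y \<in> vars m' then \<theta> (block_swap k y) else V y)"
  have disj: "vars (I A B) \<inter> vars m' = {}"
    unfolding m'_def by (rule vars_rename_apart[OF below])
  have "subst (\<lambda>y. \<theta> (block_swap k y)) m' = A"
    by (simp add: m'_def inst subst_subst)
  then have "is_mgu \<sigma> m' A"
    unfolding \<sigma>_def by (rule is_mgu_instance) (use disj in auto)
  then have mgu: "is_mgu \<sigma> A m'"
    by (simp add: is_mgu_sym)
  have "subst \<sigma> B = B"
    using disj by (intro subst_id_on_vars) (auto simp: \<sigma>_def)
  then have "variant (subst \<sigma> B) B"
    by (simp add: variant_refl)
  from cd_stepI[OF bij_id bij_block_swap _ disj[unfolded m'_def] mgu[unfolded m'_def] this]
  show ?thesis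
    by simp
qed

(* The fuel 100 suffices for all uses below; detach is sound for any fuel. *)
definition detach :: "form \<Rightarrow> form \<Rightarrow> form option" where
  "detach M m = (case M of
      I A B \<Rightarrow> map_option (\<lambda>\<sigma>. canon (subst \<sigma> B))
        (unify 100 [(A, subst (V \<circ> block_swap (Suc (max_var (I M m)))) m)])
    | _ \<Rightarrow> None)"

lemma detach_cd_step: "detach M m = Some f \<Longrightarrow> cd_step M m f"
proof -
  assume detach: "detach M m = Some f"
  then obtain A B where M: "M = I A B"
    by (cases M) (simp_all add: detach_def)
  define k where "k = Suc (max_var (I M m))"
  have below: "\<forall>x\<in>vars (I A B). x < k" "\<forall>x\<in>vars m. x < k"
    unfolding k_def M using less_Suc_max_var by fastforce+
  obtain \<sigma> where \<sigma>: "unify 100 [(A, subst (V \<circ> block_swap k) m)] = Some \<sigma>"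
    and f: "f = canon (subst \<sigma> B)"
    using detach unfolding detach_def M k_def by auto
  have "variant (subst \<sigma> B) f"
    unfolding f by (rule variant_canon)
  from cd_stepI[OF bij_id bij_block_swap _ vars_rename_apart[OF below] unify_is_mgu[OF \<sigma>] this]
  show ?thesis
    unfolding M by simp
qed

section \<open>Derivability by condensed detachment\<close>

inductive cd_derivable :: "form set \<Rightarrow> bool \<Rightarrow> form \<Rightarrow> bool" for Ax dnf where
  axiom: "a \<in> Ax \<Longrightarrow> variant a f \<Longrightarrow> cd_derivable Ax dnf f"
| step: "cd_derivable Ax dnf M \<Longrightarrow> cd_derivable Ax dnf m \<Longrightarrow> cd_step M m f \<Longrightarrow>
    (dnf \<longrightarrow> \<not> has_dn f) \<Longrightarrow> cd_derivable Ax dnf f"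

lemma cd_derivable_axiom: "a \<in> Ax \<Longrightarrow> cd_derivable Ax dnf a"
  using cd_derivable.axiom variant_refl by blast

lemma cd_proof_Nil: "cd_proof Ax []"
  by (simp add: cd_proof_def)

lemma cd_proof_snoc:
  "cd_proof Ax (ps @ [f]) \<longleftrightarrow> cd_proof Ax ps \<and>
     ((\<exists>a\<in>Ax. variant a f) \<or> (\<exists>M m. M \<in> set ps \<and> m \<in> set ps \<and> cd_step M m f))"
  unfolding cd_proof_def by (auto simp: nth_append less_Suc_eq)

lemma cd_proof_append: "cd_proof Ax ps \<Longrightarrow> cd_proof Ax qs \<Longrightarrow> cd_proof Ax (ps @ qs)"
proof (induction qs rule: rev_induct)
  case (snoc f qs)
  then show ?case
    unfolding append_assoc[symmetric] cd_proof_snoc by auto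
qed simp

lemma dn_free_cd_proof_iff:
  "dn_free_cd_proof Ax ps \<longleftrightarrow> cd_proof Ax ps \<and> (\<forall>l\<in>set ps. (\<exists>a\<in>Ax. variant a l) \<or> \<not> has_dn l)"
  unfolding dn_free_cd_proof_def by (metis in_set_conv_nth)

lemma cd_proof_if_cd_derivable:
  assumes "cd_derivable Ax dnf f"
  shows "\<exists>ps. cd_proof Ax ps \<and> (dnf \<longrightarrow> dn_free_cd_proof Ax ps) \<and> ps \<noteq> [] \<and> last ps = f"
  using assms
proof (induction rule: cd_derivable.induct)
  case (axiom a f)
  then have "cd_proof Ax [f]"
    using cd_proof_snoc[of Ax "[]"] cd_proof_Nil by auto
  with axiom show ?case
    unfolding dn_free_cd_proof_iff by (intro exI[of _ "[f]"]) auto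
next
  case (step M m f)
  then obtain ps qs where
    ps: "cd_proof Ax ps" "dnf \<longrightarrow> dn_free_cd_proof Ax ps" "ps \<noteq> []" "last ps = M" and
    qs: "cd_proof Ax qs" "dnf \<longrightarrow> dn_free_cd_proof Ax qs" "qs \<noteq> []" "last qs = m"
    by blast
  have "M \<in> set (ps @ qs)" "m \<in> set (ps @ qs)"
    using ps(3,4) qs(3,4) last_in_set by fastforce+
  then have "cd_proof Ax ((ps @ qs) @ [f])"
    using cd_proof_append[OF ps(1) qs(1)] step.hyps(3) cd_proof_snoc by blast
  with ps(2) qs(2) step.hyps(4) show ?case
    unfolding dn_free_cd_proof_iff by (intro exI[of _ "(ps @ qs) @ [f]"]) auto
qed

lemma has_dn_variant: "variant f g \<Longrightarrow> has_dn g = has_dn f"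
  unfolding variant_def by auto

lemma cd_derivable_variant:
  assumes "cd_derivable Ax dnf f" "variant f g"
  shows "cd_derivable Ax dnf g"
  using assms(1)
proof cases
  case (axiom a)
  then show ?thesis
    using assms(2) variant_trans cd_derivable.axiom by blast
next
  case (step M m)
  moreover have "cd_step M m g"
    using step(3) assms(2) variant_trans unfolding cd_step_def by blast
  ultimately show ?thesis
    using assms(2) has_dn_variant cd_derivable.step by metis
qed

lemma cd_derivable_minor_instance:
  assumes "cd_derivable Ax dnf (I A B)" "cd_derivable Ax dnf m" "subst \<theta> A = m"
    "\<And>x. x \<in> vars B - vars A \<Longrightarrow> \<exists>y. \<theta> x = V y \<and> y \<notin> vars m"
    "inj_on \<theta> (vars B - vars A)" "subst \<theta> B = f" "dnf \<longrightarrow> \<not> has_dn f"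
  shows "cd_derivable Ax dnf f"
  using cd_derivable.step[OF assms(1,2) cd_step_minor_instance[OF assms(3-5)]] assms(6,7) by simp

lemma cd_derivable_mp:
  assumes "cd_derivable Ax dnf (I p q)" "cd_derivable Ax dnf p" "dnf \<longrightarrow> \<not> has_dn q"
  shows "cd_derivable Ax dnf q"
  by (rule cd_derivable_minor_instance[OF assms(1,2), where \<theta> = V]) (use assms(3) in \<open>auto simp: inj_on_def\<close>)

lemma cd_derivable_subst_by_self_imp:
  assumes "cd_derivable Ax dnf (I (subst s t) (subst s t))" "cd_derivable Ax dnf t"
    "dnf \<longrightarrow> \<not> has_dn (subst s t)"
  shows "cd_derivable Ax dnf (subst s t)"
  using cd_derivable.step[OF assms(1,2) cd_step_major_instance] assms(3) by blast

section \<open>Condensed-detachment terms\<close>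

datatype cd_term = Hyp form | Det cd_term cd_term (infixl "\<cdot>" 100)

fun cd_eval :: "cd_term \<Rightarrow> form option" where
  "cd_eval (Hyp f) = Some f"
| "cd_eval (t \<cdot> u) = (case (cd_eval t, cd_eval u) of
      (Some M, Some m) \<Rightarrow>
        (case detach M m of Some f \<Rightarrow> if has_dn f then None else Some f | None \<Rightarrow> None)
    | _ \<Rightarrow> None)"

primrec hyps :: "cd_term \<Rightarrow> form set" where
  "hyps (Hyp f) = {f}"
| "hyps (t \<cdot> u) = hyps t \<union> hyps u"

lemma cd_derivable_cd_eval:
  "cd_eval t = Some f \<Longrightarrow> hyps t \<subseteq> Ax \<Longrightarrow> cd_derivable Ax dnf f"
proof (induction t arbitrary: f)
  case (Hyp g)
  then show ?case
    by (simp add: cd_derivable_axiom)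
next
  case (Det t u)
  obtain M m where M: "cd_eval t = Some M" and m: "cd_eval u = Some m"
    and f: "detach M m = Some f" "\<not> has_dn f"
    using Det.prems(1) by (simp split: option.split_asm if_split_asm prod.split_asm)
  have "cd_derivable Ax dnf M" "cd_derivable Ax dnf m"
    using Det.IH(1)[OF M] Det.IH(2)[OF m] Det.prems(2) by auto
  with f show ?case
    using cd_derivable.step detach_cd_step by blast
qed

(* Under the Curry-Howard reading, H1 and H2 are the types of the combinators K and S, and
   condensed detachment computes the principal type of an application. *)
abbreviation "\<K> \<equiv> Hyp H1"
abbreviation "\<S> \<equiv> Hyp H2"
abbreviation "\<B> \<equiv> \<S> \<cdot> (\<K> \<cdot> \<S>) \<cdot> \<K>"

lemmas cd_eval_simps = H1_def H2_def H3_def H4_def Hax_def detach_def canon_def block_swap_def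
  unify_eval

lemma cd_derivable_S:
  "cd_derivable Hax dnf (I (I (V 0) (I (V 1) (V 2))) (I (I (V 0) (V 1)) (I (V 0) (V 2))))"
  by (rule cd_derivable_axiom) (simp add: Hax_def H2_def)

lemma cd_derivable_identity:
  "cd_derivable Hax dnf (I (V 0) (V 0))"
  by (rule cd_derivable_cd_eval[of
      "\<S> \<cdot> \<K> \<cdot> \<K>"])
    (simp_all add: cd_eval_simps)

lemma cd_derivable_SK:
  "cd_derivable Hax dnf (I (I (V 0) (V 1)) (I (V 0) (V 0)))"
  by (rule cd_derivable_cd_eval[of
      "\<S> \<cdot> \<K>"])
    (simp_all add: cd_eval_simps)

lemma cd_derivable_C:
  "cd_derivable Hax dnf (I (I (V 0) (I (V 1) (V 2))) (I (V 1) (I (V 0) (V 2))))"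
  by (rule cd_derivable_cd_eval[of
      "\<S> \<cdot> (\<S> \<cdot> (\<K> \<cdot> \<S>) \<cdot> (\<B> \<cdot> \<K> \<cdot> \<S>)) \<cdot> (\<K> \<cdot> \<K>)"])
    (simp_all add: cd_eval_simps)

lemma cd_derivable_compose:
  "cd_derivable Hax dnf (I (I (V 0) (V 1)) (I (I (V 2) (V 3)) (I (I (V 1) (V 2)) (I (V 0) (V 3)))))"
  by (rule cd_derivable_cd_eval[of
      "\<B> \<cdot> (\<S> \<cdot> (\<B> \<cdot> \<S> \<cdot> (\<B> \<cdot> \<K> \<cdot> \<B>))) \<cdot>
        (\<B> \<cdot> \<K> \<cdot> (\<B> \<cdot> (\<S> \<cdot> \<B>) \<cdot> \<K>))"])
    (simp_all add: cd_eval_simps)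

lemma cd_derivable_self_imp_prefix:
  "cd_derivable Hax dnf (I (I (V 0) (V 1)) (I (I (V 2) (V 0)) (I (V 2) (V 2))))"
  by (rule cd_derivable_cd_eval[of
      "\<B> \<cdot> (\<B> \<cdot> (\<S> \<cdot> \<K>)) \<cdot> \<B>"])
    (simp_all add: cd_eval_simps)

lemma cd_derivable_self_imp_skip:
  "cd_derivable Hax dnf (I (I (V 0) (I (V 1) (V 2))) (I (I (V 3) (V 0)) (I (V 1) (V 1))))"
  by (rule cd_derivable_cd_eval[of
      "\<B> \<cdot> (\<B> \<cdot> (\<S> \<cdot> \<K>)) \<cdot>
        (\<S> \<cdot> (\<B> \<cdot> \<S> \<cdot> (\<B> \<cdot> (\<B> \<cdot> \<S>) \<cdot> (\<B> \<cdot> (\<B> \<cdot> \<K>) \<cdot> (\<B> \<cdot> (\<B> \<cdot> \<S>) \<cdot> \<B>))))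
          \<cdot> (\<K> \<cdot> (\<K> \<cdot> \<K>)))"])
    (simp_all add: cd_eval_simps)

lemma cd_derivable_compose_under:
  "cd_derivable Hax dnf
     (I (I (V 0) (I (V 1) (V 2))) (I (V 0) (I (I (V 3) (V 4)) (I (I (V 2) (V 3)) (I (V 1) (V 4))))))"
  by (rule cd_derivable_cd_eval[of
      "\<B> \<cdot> (\<B> \<cdot> (\<S> \<cdot> (\<B> \<cdot> \<S> \<cdot> (\<B> \<cdot> \<K> \<cdot> \<B>)))) \<cdot>
        (\<B> \<cdot> (\<B> \<cdot> \<K>) \<cdot> (\<B> \<cdot> (\<B> \<cdot> (\<S> \<cdot> \<B>)) \<cdot> (\<B> \<cdot> \<K>)))"])
    (simp_all add: cd_eval_simps)

lemma cd_derivable_contrapose_under: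
  "cd_derivable Hax dnf (I (I (V 0) (I (V 1) (V 2))) (I (V 0) (I (N (V 2)) (N (V 1)))))"
  by (rule cd_derivable_cd_eval[of
      "\<B> \<cdot> (\<B> \<cdot> (\<B> \<cdot> Hyp H3)) \<cdot>
        (\<S> \<cdot> (\<B> \<cdot> \<S> \<cdot> (\<B> \<cdot> (\<B> \<cdot> \<S>) \<cdot> (\<B> \<cdot> (\<B> \<cdot> \<K>) \<cdot> (\<B> \<cdot> (\<B> \<cdot> \<S>) \<cdot>
          (\<B> \<cdot> (\<B> \<cdot> Hyp H4)))))) \<cdot> (\<K> \<cdot> (\<K> \<cdot> \<K>)))"])
    (simp_all add: cd_eval_simps)

section \<open>Self-implication\<close>

primrec imp_chain :: "nat list \<Rightarrow> nat \<Rightarrow> form" where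
  "imp_chain [] z = V z"
| "imp_chain (x # xs) z = I (V x) (imp_chain xs z)"

lemma vars_imp_chain [simp]: "vars (imp_chain xs z) = insert z (set xs)"
  by (induction xs) auto

lemma not_has_dn_imp_chain [simp]: "\<not> has_dn (imp_chain xs z)"
  by (induction xs) auto

lemma cd_derivable_var_self_imp: "cd_derivable Hax dnf (I (V x) (V x))"
  using cd_derivable_variant[OF cd_derivable_identity variant_rename[of "\<lambda>_. x"]] by simp

lemma cd_derivable_imp_chain_self_imp:
  "distinct xs \<Longrightarrow> z \<notin> set xs \<Longrightarrow> cd_derivable Hax dnf (I (imp_chain xs z) (imp_chain xs z))"
proof (induction xs)
  case Nil
  then show ?case
    using cd_derivable_var_self_imp by simp
next
  case (Cons x xs)
  let ?C = "imp_chain xs z"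
  have "cd_derivable Hax dnf (I (I (V (x + 1)) (V (x + 2))) (I (I (V x) (V (x + 1))) (I (V x) (V (x + 2)))))"
    by (rule cd_derivable_minor_instance[OF cd_derivable_compose cd_derivable_var_self_imp,
          where \<theta> = "V(0 := V x, 1 := V x, 2 := V (x + 1), 3 := V (x + 2))"])
      (auto simp: inj_on_def)
  then have "cd_derivable Hax dnf (I (I (V x) ?C) (I (V x) ?C))"
    by (rule cd_derivable_minor_instance[OF _ Cons.IH, where \<theta> = "V(x + 1 := ?C, x + 2 := ?C)"])
      (use Cons.prems in \<open>auto simp: inj_on_def\<close>)
  then show ?case
    by simp
qed

lemma cd_derivable_imp_chain_imp_var_self_imp:
  "distinct xs \<Longrightarrow> z \<notin> set xs \<Longrightarrow> x \<in> set xs \<Longrightarrow>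
    cd_derivable Hax dnf (I (imp_chain xs z) (I (V x) (V x)))"
proof (induction xs)
  case (Cons y xs)
  let ?C = "imp_chain xs z"
  show ?case
  proof (cases "x = y")
    case True
    have "cd_derivable Hax dnf (I (I (V y) ?C) (I (V y) (V y)))"
      by (rule cd_derivable_minor_instance[OF cd_derivable_self_imp_prefix cd_derivable_imp_chain_self_imp,
            where \<theta> = "V(0 := ?C, 1 := ?C, 2 := V y)"])
        (use Cons.prems in \<open>auto simp: inj_on_def\<close>)
    with True show ?thesis
      by simp
  next
    case False
    have "cd_derivable Hax dnf (I (I (V y) ?C) (I (V x) (V x)))"
      by (rule cd_derivable_minor_instance[OF cd_derivable_self_imp_skip Cons.IH,
            where \<theta> = "V(0 := ?C, 1 := V x, 2 := V x, 3 := V y)"])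
        (use Cons.prems False in \<open>auto simp: inj_on_def\<close>)
    then show ?thesis
      by simp
  qed
qed simp

lemma cd_derivable_imp_chain_imp_self_imp:
  assumes "vars a \<subseteq> set xs" "distinct xs" "z \<notin> set xs" "dnf \<longrightarrow> \<not> has_dn a"
  shows "cd_derivable Hax dnf (I (imp_chain xs z) (I a a))"
  using assms
proof (induction a)
  case (V x)
  then show ?case
    using cd_derivable_imp_chain_imp_var_self_imp by simp
next
  case (I a b)
  let ?C = "imp_chain xs z"
  define r where "r = Suc (max_var ?C)"
  define s where "s = Suc r"
  have fresh: "r \<notin> vars ?C" "s \<notin> vars ?C"
    using less_Suc_max_var unfolding r_def s_def by (metis less_SucI less_irrefl)+
  then have fresh_a: "r \<notin> vars a" "s \<notin> vars a"
    using I.prems(1) by auto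
  have ab: "cd_derivable Hax dnf (I ?C (I a a))" "cd_derivable Hax dnf (I ?C (I b b))"
    using I by auto
  have "cd_derivable Hax dnf (I ?C (I (I (V r) (V s)) (I (I a (V r)) (I a (V s)))))"
    by (rule cd_derivable_minor_instance[OF cd_derivable_compose_under ab(1),
          where \<theta> = "V(0 := ?C, 1 := a, 2 := a, 3 := V r, 4 := V s)"])
      (use fresh fresh_a I.prems(4) in \<open>auto simp: inj_on_def vars_subst s_def\<close>)
  then have lifted: "cd_derivable Hax dnf (I (I ?C (I (V r) (V s))) (I ?C (I (I a (V r)) (I a (V s)))))"
    by (rule cd_derivable_minor_instance[OF cd_derivable_S,
          where \<theta> = "V(0 := ?C, 1 := I (V r) (V s), 2 := I (I a (V r)) (I a (V s)))"])
      (use I.prems(4) in \<open>auto simp: inj_on_def\<close>)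
  have "subst (V(r := b, s := b)) ?C = ?C" "subst (V(r := b, s := b)) a = a"
    using fresh fresh_a by (auto intro: subst_id_on_vars)
  then show ?case
    by (intro cd_derivable_minor_instance[OF lifted ab(2), where \<theta> = "V(r := b, s := b)"])
      (use I.prems(1,4) in \<open>auto simp: inj_on_def\<close>)
next
  case (N a)
  then have "cd_derivable Hax dnf (I (imp_chain xs z) (I a a))"
    by simp
  then show ?case
    by (rule cd_derivable_minor_instance[OF cd_derivable_contrapose_under _,
          where \<theta> = "V(0 := imp_chain xs z, 1 := a, 2 := a)"])
      (use N.prems(4) in \<open>auto simp: inj_on_def\<close>)
qed

lemma cd_derivable_self_imp:
  assumes "dnf \<longrightarrow> \<not> has_dn f"
  shows "cd_derivable Hax dnf (I f f)"
proof -
  define xs where "xs = sorted_list_of_set (vars f)"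
  define z where "z = Suc (max_var f)"
  have xs: "set xs = vars f" "distinct xs"
    by (simp_all add: xs_def)
  have z: "z \<notin> set xs"
    using less_Suc_max_var xs(1) unfolding z_def by blast
  let ?C = "imp_chain xs z"
  have "cd_derivable Hax dnf (I ?C (I f f))"
    using xs z assms by (intro cd_derivable_imp_chain_imp_self_imp) auto
  then have "cd_derivable Hax dnf (I f (I ?C f))"
    by (rule cd_derivable_minor_instance[OF cd_derivable_C, where \<theta> = "V(0 := ?C, 1 := f, 2 := f)"])
      (use assms in \<open>auto simp: inj_on_def\<close>)
  then show ?thesis
    by (rule cd_derivable_minor_instance[OF cd_derivable_SK, where \<theta> = "V(0 := f, 1 := I ?C f)"])
      (use assms in \<open>auto simp: inj_on_def\<close>)
qed

lemma cd_derivable_subst: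
  "cd_derivable Hax dnf t \<Longrightarrow> (dnf \<longrightarrow> \<not> has_dn (subst s t)) \<Longrightarrow> cd_derivable Hax dnf (subst s t)"
  using cd_derivable_subst_by_self_imp cd_derivable_self_imp by blast

lemma cd_derivable_if_mp_sub_provable: "mp_sub_provable Hax b \<Longrightarrow> cd_derivable Hax False b"
proof (induction rule: mp_sub_provable.induct)
  case (ax a)
  then show ?case
    by (rule cd_derivable_axiom)
next
  case (sub p s)
  then show ?case
    by (simp add: cd_derivable_subst)
next
  case (mp p q)
  then show ?case
    using cd_derivable_mp by blast
qed

lemma ball_set_prefix_induct:
  assumes "\<And>k. k < length ls \<Longrightarrow> \<forall>x\<in>set (take k ls). P x \<Longrightarrow> P (ls ! k)"
  shows "\<forall>x\<in>set ls. P x"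
proof -
  have "\<forall>x\<in>set (take k ls). P x" if "k \<le> length ls" for k
    using that
  proof (induction k)
    case (Suc k)
    then show ?case
      using assms[of k] by (simp add: take_Suc_conv_app_nth)
  qed simp
  from this[of "length ls"] show ?thesis
    by simp
qed

lemma cd_derivable_mp_inst_proof:
  assumes "mp_inst_proof Hax ls" "\<forall>l\<in>set ls. \<not> has_dn l"
  shows "\<forall>l\<in>set ls. cd_derivable Hax True l"
proof (rule ball_set_prefix_induct)
  fix k assume k: "k < length ls" and earlier: "\<forall>x\<in>set (take k ls). cd_derivable Hax True x"
  have dn: "\<not> has_dn (ls ! k)"
    using assms(2) k by simp
  consider (axiom) a s where "a \<in> Hax" "ls ! k = subst s a"
    | (mp) p where "I p (ls ! k) \<in> set (take k ls)" "p \<in> set (take k ls)"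
    using assms(1) k unfolding mp_inst_proof_def by blast
  then show "cd_derivable Hax True (ls ! k)"
  proof cases
    case axiom
    then show ?thesis
      using cd_derivable_subst[OF cd_derivable_axiom] dn by metis
  next
    case mp
    then show ?thesis
      using earlier cd_derivable_mp dn by blast
  qed
qed

lemma mp_sub_provable_cd_step:
  assumes "mp_sub_provable Ax M" "mp_sub_provable Ax m" "cd_step M m f"
  shows "mp_sub_provable Ax f"
proof -
  obtain \<rho>1 \<rho>2 A B \<sigma> where step: "subst (V \<circ> \<rho>1) M = I A B"
    "is_mgu \<sigma> A (subst (V \<circ> \<rho>2) m)" "variant (subst \<sigma> B) f"
    using assms(3) unfolding cd_step_def by blast
  have "mp_sub_provable Ax (subst \<sigma> (subst (V \<circ> \<rho>1) M))"
    by (intro mp_sub_provable.sub assms(1))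
  then have major: "mp_sub_provable Ax (I (subst \<sigma> A) (subst \<sigma> B))"
    using step(1) by simp
  have "mp_sub_provable Ax (subst \<sigma> (subst (V \<circ> \<rho>2) m))"
    by (intro mp_sub_provable.sub assms(2))
  then have minor: "mp_sub_provable Ax (subst \<sigma> A)"
    using step(2) unfolding is_mgu_def by simp
  obtain \<rho> where "f = subst (V \<circ> \<rho>) (subst \<sigma> B)"
    using step(3) unfolding variant_def by blast
  then show ?thesis
    using mp_sub_provable.sub[OF mp_sub_provable.mp[OF major minor]] by simp
qed

lemma mp_sub_provable_cd_proof: "cd_proof Ax ls \<Longrightarrow> \<forall>l\<in>set ls. mp_sub_provable Ax l"
proof (rule ball_set_prefix_induct)
  fix k assume "cd_proof Ax ls" "k < length ls" and earlier: "\<forall>x\<in>set (take k ls). mp_sub_provable Ax x"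
  then consider (axiom) a \<rho> where "a \<in> Ax" "ls ! k = subst (V \<circ> \<rho>) a"
    | (step) M m where "M \<in> set (take k ls)" "m \<in> set (take k ls)" "cd_step M m (ls ! k)"
    unfolding cd_proof_def variant_def by blast
  then show "mp_sub_provable Ax (ls ! k)"
  proof cases
    case axiom
    then show ?thesis
      by (metis mp_sub_provable.ax mp_sub_provable.sub)
  next
    case step
    then show ?thesis
      using earlier mp_sub_provable_cd_step by blast
  qed
qed

theorem theorem7:
  shows "(\<forall>b. cd_provable Hax b \<longleftrightarrow> mp_sub_provable Hax b) \<and>
         (\<forall>b ls. mp_inst_proof Hax ls \<and> ls \<noteq> [] \<and> last ls = b \<and>
            (\<forall>l \<in> set ls. \<not> has_dn l) \<longrightarrow>
            (\<exists>ps. dn_free_cd_proof Hax ps \<and> ps \<noteq> [] \<and> last ps = b))"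
proof (intro conjI allI impI)
  fix b
  show "cd_provable Hax b \<longleftrightarrow> mp_sub_provable Hax b"
  proof
    assume "cd_provable Hax b"
    then show "mp_sub_provable Hax b"
      unfolding cd_provable_def using mp_sub_provable_cd_proof last_in_set by blast
  next
    assume "mp_sub_provable Hax b"
    then show "cd_provable Hax b"
      unfolding cd_provable_def using cd_derivable_if_mp_sub_provable cd_proof_if_cd_derivable by blast
  qed
next
  fix b ls
  assume "mp_inst_proof Hax ls \<and> ls \<noteq> [] \<and> last ls = b \<and> (\<forall>l \<in> set ls. \<not> has_dn l)"
  then have "cd_derivable Hax True b"
    using cd_derivable_mp_inst_proof last_in_set by metis
  then show "\<exists>ps. dn_free_cd_proof Hax ps \<and> ps \<noteq> [] \<and> last ps = b"
    using cd_proof_if_cd_derivable by blast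
qed

end
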